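(* Let $n\ge 2$ be an integer. A relative equilibrium of the Newtonian planar $(1+2n)$-body problem whose configuration consists of a central mass at the origin surrounded by two homothetic regular $n$-gons, with vertices $\rho_1e^{2\pi i l/n}$ and $\rho_2e^{2\pi i l/n}$ ($l=0,\dots,n-1$, $0<\rho_1<\rho_2$), is never really perverse.
   Context: The Newtonian planar $N$-body problem (gravitational constant $1$): bodies with masses $\mu_i>0$ at positions $r_i\in\mathbb{C}$ satisfy $\mu_i\ddot r_i=\sum_{j\ne i}\mu_i\mu_j\,\frac{r_j-r_i}{|r_j-r_i|^3}$. A relative equilibrium (angular velocity $1$) is a motion $r_i(t)=r_ie^{it}$ that is a solution. A mass system for this configuration is a vector $(m_0,m_1,m_2)$ of positive numbers: mass $m_0$ at the center and mass $m_j$ at every vertex of the $j$-th polygon; total mass $m_0+n(m_1+m_2)$, center of mass at the origin. The relative equilibrium is really perverse if there exist two distinct mass systems with the same total mass and the same center of mass for each of which $r_i(t)=r_ie^{it}$ is a solution. *)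

theory Defs
  imports "HOL-Analysis.Analysis"
begin

definition nbody_solution :: "'i set \<Rightarrow> ('i \<Rightarrow> real) \<Rightarrow> ('i \<Rightarrow> real \<Rightarrow> complex) \<Rightarrow> bool" where
  "nbody_solution I mu q \<longleftrightarrow>
     (\<exists>v :: 'i \<Rightarrow> real \<Rightarrow> complex. \<forall>i\<in>I. \<forall>t::real.
        (q i has_vector_derivative v i t) (at t) \<and>
        (\<exists>a. (v i has_vector_derivative a) (at t) \<and>
             mu i *\<^sub>R a = (\<Sum>j\<in>I - {i}. (mu i * mu j / (cmod (q j t - q i t)) ^ 3) *\<^sub>R (q j t - q i t))))"

text \<open>Bodies of the (1+2n)-body configuration: (0,0) is the central body, (k,l) with
  k \<in> {1,2}, l < n is the l-th vertex of the k-th polygon.\<close>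
definition bodies :: "nat \<Rightarrow> (nat \<times> nat) set" where
  "bodies n = {(0,0)} \<union> {(k,l). (k = 1 \<or> k = 2) \<and> l < n}"

definition twogon_pos :: "nat \<Rightarrow> real \<Rightarrow> real \<Rightarrow> nat \<times> nat \<Rightarrow> complex" where
  "twogon_pos n \<rho>1 \<rho>2 b =
     (if fst b = 0 then 0
      else complex_of_real (if fst b = 1 then \<rho>1 else \<rho>2) *
           exp (2 * of_real pi * \<i> * of_nat (snd b) / of_nat n))"

definition twogon_motion :: "nat \<Rightarrow> real \<Rightarrow> real \<Rightarrow> nat \<times> nat \<Rightarrow> real \<Rightarrow> complex" where
  "twogon_motion n \<rho>1 \<rho>2 b t = twogon_pos n \<rho>1 \<rho>2 b * exp (\<i> * of_real t)"

definition body_mass :: "real \<times> real \<times> real \<Rightarrow> nat \<times> nat \<Rightarrow> real" where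
  "body_mass m b = (case m of (m0, m1, m2) \<Rightarrow>
      (if fst b = 0 then m0 else if fst b = 1 then m1 else m2))"

definition total_mass :: "nat \<Rightarrow> real \<times> real \<times> real \<Rightarrow> real" where
  "total_mass n m = (case m of (m0, m1, m2) \<Rightarrow> m0 + real n * (m1 + m2))"

definition center_of_mass :: "nat \<Rightarrow> real \<Rightarrow> real \<Rightarrow> real \<times> real \<times> real \<Rightarrow> complex" where
  "center_of_mass n \<rho>1 \<rho>2 m =
     (1 / total_mass n m) *\<^sub>R (\<Sum>b\<in>bodies n. body_mass m b *\<^sub>R twogon_pos n \<rho>1 \<rho>2 b)"

definition rel_eq_mass_system :: "nat \<Rightarrow> real \<Rightarrow> real \<Rightarrow> real \<times> real \<times> real \<Rightarrow> bool" where
  "rel_eq_mass_system n \<rho>1 \<rho>2 m \<longleftrightarrow>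
     (case m of (m0, m1, m2) \<Rightarrow> m0 > 0 \<and> m1 > 0 \<and> m2 > 0) \<and>
     center_of_mass n \<rho>1 \<rho>2 m = 0 \<and>
     nbody_solution (bodies n) (body_mass m) (twogon_motion n \<rho>1 \<rho>2)"

definition really_perverse :: "nat \<Rightarrow> real \<Rightarrow> real \<Rightarrow> bool" where
  "really_perverse n \<rho>1 \<rho>2 \<longleftrightarrow>
     (\<exists>m m'. m \<noteq> m' \<and> rel_eq_mass_system n \<rho>1 \<rho>2 m \<and> rel_eq_mass_system n \<rho>1 \<rho>2 m' \<and>
        total_mass n m = total_mass n m' \<and>
        center_of_mass n \<rho>1 \<rho>2 m = center_of_mass n \<rho>1 \<rho>2 m')"

end

theory Submission
  imports Defs
begin

(* Subtracting the equations of motion at the vertices rho1 and rho2 on the positive real axis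
   for two mass systems with the same total mass gives a homogeneous 2x2 linear system for the
   differences of the ring masses.  Its determinant is positive because the outer ring pulls the
   inner vertex outwards, whereas the inner ring pulls the outer vertex inwards more strongly than
   its total mass placed at the centre would.  Both facts come from writing, for w = r e^(i phi)
   with r = rho1/rho2 < 1,
     conj (1 - w) / |1 - w|^3 = (1 - w)^(-3/2) (1 - conj w)^(-1/2)
   as a double power series in w and conj w with nonnegative coefficients: averaging over the
   n-th roots of unity keeps only nonnegative terms, including the diagonal ones. *)

definition neg_binomial_coeff :: "real \<Rightarrow> nat \<Rightarrow> real" where
  "neg_binomial_coeff s k = pochhammer s k / fact k"

lemma neg_binomial_coeff_nonneg: "0 \<le> s \<Longrightarrow> 0 \<le> neg_binomial_coeff s k"
  unfolding neg_binomial_coeff_def pochhammer_prod by (intro divide_nonneg_pos prod_nonneg) auto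

lemma neg_binomial_sums:
  fixes w :: complex
  assumes "norm w < 1"
  shows "(\<lambda>k. of_real (neg_binomial_coeff s k) * w ^ k) sums (1 - w) powr (- of_real s)"
proof -
  have "(\<lambda>k. ((- of_real s) gchoose k) * (- w) ^ k) sums (1 + (- w)) powr (- of_real s)"
    using gen_binomial_complex[of "- w"] assms by simp
  moreover have "((- of_real s) gchoose k) * (- w) ^ k = of_real (neg_binomial_coeff s k) * w ^ k" for k
    by (simp add: gbinomial_pochhammer neg_binomial_coeff_def pochhammer_of_real power_minus')
  ultimately show ?thesis by simp
qed

lemma inverse_norm_div_eq_cnj_div:
  fixes z :: complex
  assumes "z \<noteq> 0"
  shows "of_real (1 / norm z) / z = cnj z / of_real (norm z ^ 3)"
proof -
  have "cnj z = of_real (norm z ^ 2) / z"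
    using assms by (simp only: complex_norm_square) simp
  then show ?thesis
    using assms by (simp add: field_simps power3_eq_cube power2_eq_square)
qed

lemma cnj_div_norm_cube_eq_powr:
  fixes w :: complex
  assumes "norm w < 1"
  shows "cnj (1 - w) / of_real (norm (1 - w) ^ 3) = (1 - w) powr (-3/2) * (1 - cnj w) powr (-1/2)"
proof -
  have re: "Re (1 - w) > 0"
    using assms abs_Re_le_cmod[of w] by simp
  hence nz: "1 - w \<noteq> 0" by auto
  have "(1 - cnj w) powr (-1/2) = cnj ((1 - w) powr (-1/2))"
    using cnj_powr[of "1 - w" "-1/2"] re by simp
  hence "(1 - w) powr (-1/2) * (1 - cnj w) powr (-1/2) = of_real ((norm ((1 - w) powr (-1/2)))\<^sup>2)"
    by (simp only: complex_norm_square)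
  also have "norm ((1 - w) powr (-1/2)) = norm (1 - w) powr (-1/2)"
    by (subst norm_powr_real_powr') auto
  also have "(norm (1 - w) powr (-1/2))\<^sup>2 = 1 / norm (1 - w)"
    using nz by (simp add: power2_eq_square powr_add [symmetric] powr_neg_one)
  finally have half: "(1 - w) powr (-1/2) * (1 - cnj w) powr (-1/2) = of_real (1 / norm (1 - w))" .
  have "(1 - w) powr (-3/2) = (1 - w) powr (-1/2) * (1 - w) powr (-1)"
    by (simp flip: powr_add)
  also have "(1 - w) powr (-1) = 1 / (1 - w)"
    by (simp add: powr_minus divide_inverse)
  finally have "(1 - w) powr (-3/2) * (1 - cnj w) powr (-1/2)
      = (1 - w) powr (-1/2) * (1 - cnj w) powr (-1/2) / (1 - w)"
    by simp
  also have "\<dots> = of_real (1 / norm (1 - w)) / (1 - w)"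
    by (simp only: half)
  also have "\<dots> = cnj (1 - w) / of_real (norm (1 - w) ^ 3)"
    by (rule inverse_norm_div_eq_cnj_div[OF nz])
  finally show ?thesis by simp
qed

lemma sum_roots_power_mult_cnj_power:
  fixes \<omega> :: complex
  assumes "\<omega> ^ n = 1"
  shows "(\<Sum>l<n. (\<omega> ^ l) ^ m * (cnj \<omega> ^ l) ^ k) = (if \<omega> ^ m * cnj \<omega> ^ k = 1 then of_nat n else 0)"
proof -
  have "(\<Sum>l<n. (\<omega> ^ l) ^ m * (cnj \<omega> ^ l) ^ k) = (\<Sum>l<n. (\<omega> ^ m * cnj \<omega> ^ k) ^ l)"
    by (simp add: power_mult_distrib flip: power_mult) (simp add: mult.commute)
  moreover have "(\<omega> ^ m) ^ n = 1" "(cnj \<omega> ^ k) ^ n = 1"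
    by (metis assms power_mult mult.commute power_one complex_cnj_one complex_cnj_power)+
  then have "(\<omega> ^ m * cnj \<omega> ^ k) ^ n = 1"
    by (simp add: power_mult_distrib)
  ultimately show ?thesis
    by (auto simp: sum_gp_strict)
qed

lemma sum_roots_mult_poly_cnj_poly:
  fixes \<omega> :: complex and r :: real
  assumes "\<omega> ^ n = 1"
  shows "(\<Sum>l<n. (\<omega> ^ l) ^ p * ((\<Sum>k<N. of_real (a k) * (of_real r * \<omega> ^ l) ^ k)
            * (\<Sum>i<N. of_real (b i) * cnj (of_real r * \<omega> ^ l) ^ i)))
       = of_real (\<Sum>i<N. \<Sum>k<N. a k * b i * r ^ (k + i) * (if \<omega> ^ (p + k) * cnj \<omega> ^ i = 1 then real n else 0))"
proof -
  have "(\<Sum>l<n. (\<omega> ^ l) ^ p * ((\<Sum>k<N. of_real (a k) * (of_real r * \<omega> ^ l) ^ k)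
            * (\<Sum>i<N. of_real (b i) * cnj (of_real r * \<omega> ^ l) ^ i)))
      = (\<Sum>l<n. \<Sum>i<N. \<Sum>k<N. of_real (a k * b i * r ^ (k + i)) * ((\<omega> ^ l) ^ (p + k) * (cnj \<omega> ^ l) ^ i))"
    by (simp add: sum_distrib_left sum_distrib_right power_add power_mult_distrib mult_ac)
  also have "\<dots> = (\<Sum>i<N. \<Sum>k<N. of_real (a k * b i * r ^ (k + i)) * (\<Sum>l<n. (\<omega> ^ l) ^ (p + k) * (cnj \<omega> ^ l) ^ i))"
    by (simp add: sum_distrib_left sum.swap[of _ "{..<n}"] sum.swap[of _ "{..<n}" "{..<N}"])
  also have "\<dots> = of_real (\<Sum>i<N. \<Sum>k<N. a k * b i * r ^ (k + i) * (if \<omega> ^ (p + k) * cnj \<omega> ^ i = 1 then real n else 0))"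
    by (simp only: sum_roots_power_mult_cnj_power[OF assms] of_real_sum of_real_mult) (simp add: if_distrib cong: if_cong)
  finally show ?thesis .
qed

lemma Re_sum_roots_cnj_div_norm_cube:
  fixes \<omega> :: complex and r :: real
  assumes "0 \<le> r" "r < 1" "\<omega> ^ n = 1" "norm \<omega> = 1"
  defines "f \<equiv> \<lambda>z. cnj (1 - of_real r * z) / of_real (norm (1 - of_real r * z) ^ 3)"
  shows "Re (\<Sum>l<n. (\<omega> ^ l) ^ p * f (\<omega> ^ l)) \<ge> 0"
    and "Re (\<Sum>l<n. f (\<omega> ^ l)) \<ge> n * (1 + 3/4 * r\<^sup>2)"
proof -
  define a where "a = neg_binomial_coeff (3/2)"
  define b where "b = neg_binomial_coeff (1/2)"
  define F where "F p N = (\<Sum>i<N. \<Sum>k<N. a k * b i * r ^ (k + i) *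
      (if \<omega> ^ (p + k) * cnj \<omega> ^ i = 1 then real n else 0))" for p N
  have F_lim: "(\<lambda>N. F p N) \<longlonglongrightarrow> Re (\<Sum>l<n. (\<omega> ^ l) ^ p * f (\<omega> ^ l))" for p
  proof -
    have w: "norm (of_real r * \<omega> ^ l) < 1" "norm (cnj (of_real r * \<omega> ^ l)) < 1" for l
      using assms(1,2,4) by (simp_all add: norm_mult norm_power)
    have partial_sums: "(\<lambda>N. \<Sum>k<N. of_real (neg_binomial_coeff s k) * z ^ k)
        \<longlonglongrightarrow> (1 - z) powr (- of_real s)" if "norm z < 1" for s and z :: complex
      using neg_binomial_sums[OF that] by (simp add: sums_def)
    have "(\<lambda>N. \<Sum>l<n. (\<omega> ^ l) ^ p * ((\<Sum>k<N. of_real (a k) * (of_real r * \<omega> ^ l) ^ k)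
            * (\<Sum>i<N. of_real (b i) * cnj (of_real r * \<omega> ^ l) ^ i)))
        \<longlonglongrightarrow> (\<Sum>l<n. (\<omega> ^ l) ^ p * ((1 - of_real r * \<omega> ^ l) powr (- of_real (3/2))
            * (1 - cnj (of_real r * \<omega> ^ l)) powr (- of_real (1/2))))"
      unfolding a_def b_def by (intro tendsto_intros partial_sums w)
    also have "(\<Sum>l<n. (\<omega> ^ l) ^ p * ((1 - of_real r * \<omega> ^ l) powr (- of_real (3/2))
            * (1 - cnj (of_real r * \<omega> ^ l)) powr (- of_real (1/2)))) = (\<Sum>l<n. (\<omega> ^ l) ^ p * f (\<omega> ^ l))"
      using cnj_div_norm_cube_eq_powr[OF w(1)] by (simp add: f_def)
    finally show ?thesis
      unfolding sum_roots_mult_poly_cnj_poly[OF assms(3)] F_def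
      by (auto dest: tendsto_Re)
  qed
  have a_nonneg: "a k \<ge> 0" and b_nonneg: "b k \<ge> 0" for k
    by (simp_all add: a_def b_def neg_binomial_coeff_nonneg)
  have terms_nonneg: "a k * b i * r ^ (k + i) * (if c then real n else 0) \<ge> 0" for k i c
    using a_nonneg b_nonneg assms(1) by simp
  show "Re (\<Sum>l<n. (\<omega> ^ l) ^ p * f (\<omega> ^ l)) \<ge> 0"
    using F_lim by (rule LIMSEQ_le_const) (auto simp: F_def intro!: sum_nonneg terms_nonneg)
  have "n * (1 + 3/4 * r\<^sup>2) \<le> F 0 N" if "N \<ge> 2" for N
  proof -
    have diagonal: "\<omega> ^ i * cnj \<omega> ^ i = 1" for i
      using complex_norm_square[of \<omega>] assms(4) by (simp flip: power_mult_distrib)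
    have "n * (1 + 3/4 * r\<^sup>2) = (\<Sum>i<2. a i * b i * r ^ (i + i) * real n)"
      by (simp add: a_def b_def neg_binomial_coeff_def numeral_2_eq_2 power2_eq_square algebra_simps)
    also have "\<dots> \<le> (\<Sum>i<N. a i * b i * r ^ (i + i) * real n)"
      using that terms_nonneg[of _ _ True] by (intro sum_mono2) auto
    also have "\<dots> \<le> F 0 N"
      unfolding F_def
    proof (rule sum_mono)
      fix i assume "i \<in> {..<N}"
      then show "a i * b i * r ^ (i + i) * real n \<le> (\<Sum>k<N. a k * b i * r ^ (k + i) *
          (if \<omega> ^ (0 + k) * cnj \<omega> ^ i = 1 then real n else 0))"
        using member_le_sum[of i "{..<N}" "\<lambda>k. a k * b i * r ^ (k + i) *
          (if \<omega> ^ k * cnj \<omega> ^ i = 1 then real n else 0)"] diagonal terms_nonneg by simp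
    qed
    finally show ?thesis .
  qed
  then show "Re (\<Sum>l<n. f (\<omega> ^ l)) \<ge> n * (1 + 3/4 * r\<^sup>2)"
    using LIMSEQ_le_const[OF F_lim[of 0]] by auto
qed

definition attraction :: "complex \<Rightarrow> complex \<Rightarrow> complex" where
  "attraction x y = (1 / cmod (y - x) ^ 3) *\<^sub>R (y - x)"

lemma attraction_scale:
  assumes "0 < c"
  shows "attraction (of_real c * x) (of_real c * y) = (1 / c\<^sup>2) *\<^sub>R attraction x y"
proof -
  have "of_real c * y - of_real c * x = of_real c * (y - x)"
    by (simp add: algebra_simps)
  then show ?thesis
    using assms by (simp add: attraction_def norm_mult scaleR_conv_of_real power3_eq_cube power2_eq_square)
qed

lemma Re_attraction_to_origin: "0 < \<rho> \<Longrightarrow> Re (attraction (of_real \<rho>) 0) = - 1 / \<rho>\<^sup>2"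
  by (simp add: attraction_def power3_eq_cube power2_eq_square)

lemma attraction_on_unit_circle:
  assumes "norm z = 1"
  shows "attraction (of_real r) z = z * (cnj (1 - of_real r * z) / of_real (norm (1 - of_real r * z) ^ 3))"
proof -
  have "z * cnj z = 1"
    using assms complex_norm_square[of z] by simp
  then have "z - of_real r = z * cnj (1 - of_real r * z)"
    by (simp add: algebra_simps)
  moreover have "norm (cnj (1 - of_real r * z)) = norm (1 - of_real r * z)"
    by (rule complex_mod_cnj)
  ultimately show ?thesis
    using assms by (simp add: attraction_def norm_mult scaleR_conv_of_real)
qed

lemma Re_attraction_from_one: "Re (attraction 1 w) = - Re (cnj (1 - w) / of_real (norm (1 - w) ^ 3))"
  by (simp add: attraction_def norm_minus_commute minus_divide_left)

lemma rotating_solution_balance: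
  fixes x :: "'i \<Rightarrow> complex"
  assumes "nbody_solution I mu (\<lambda>i t. x i * exp (\<i> * of_real t))" "i \<in> I" "mu i \<noteq> 0"
  shows "- x i = (\<Sum>j\<in>I - {i}. mu j *\<^sub>R attraction (x i) (x j))"
proof -
  have rotation: "((\<lambda>t. c * exp (\<i> * of_real t)) has_vector_derivative c * \<i> * exp (\<i> * of_real t)) (at t)"
    for c :: complex and t :: real
    by (rule has_vector_derivative_real_field) (auto intro!: derivative_eq_intros)
  let ?motion = "\<lambda>i t. x i * exp (\<i> * of_real t)"
  obtain V where V: "\<forall>t. (?motion i has_vector_derivative V i t) (at t) \<and>
      (\<exists>a. (V i has_vector_derivative a) (at t) \<and> mu i *\<^sub>R a =
        (\<Sum>j\<in>I - {i}. (mu i * mu j / cmod (?motion j t - ?motion i t) ^ 3) *\<^sub>R (?motion j t - ?motion i t)))"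
    using assms(1,2) unfolding nbody_solution_def by blast
  then obtain a where a: "(V i has_vector_derivative a) (at 0)" and
    law: "mu i *\<^sub>R a = (\<Sum>j\<in>I - {i}. (mu i * mu j / cmod (x j - x i) ^ 3) *\<^sub>R (x j - x i))"
    by fastforce
  have "V i = (\<lambda>t. x i * \<i> * exp (\<i> * of_real t))"
    using V rotation vector_derivative_unique_at by blast
  then have "a = x i * \<i> * \<i> * exp (\<i> * of_real 0)"
    using a rotation[of "x i * \<i>" 0] vector_derivative_unique_at by metis
  then have "a = - x i"
    by (simp add: mult.assoc)
  with law have "mu i *\<^sub>R (- x i) = mu i *\<^sub>R (\<Sum>j\<in>I - {i}. mu j *\<^sub>R attraction (x i) (x j))"
    by (simp add: attraction_def scaleR_sum_right)
  with assms(3) show ?thesis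
    by (simp only: scaleR_cancel_left) simp
qed

definition polygon_vertex :: "nat \<Rightarrow> nat \<Rightarrow> complex" where
  "polygon_vertex n l = exp (2 * of_real pi * \<i> * of_nat l / of_nat n)"

lemma polygon_vertex_eq_power: "polygon_vertex n l = polygon_vertex n 1 ^ l"
  unfolding polygon_vertex_def by (simp add: exp_of_nat_mult [symmetric] mult_ac)

lemma polygon_vertex_power_n: "polygon_vertex n 1 ^ n = 1"
  by (cases "n = 0") (simp_all add: polygon_vertex_def exp_of_nat_mult [symmetric])

lemma norm_polygon_vertex: "norm (polygon_vertex n l) = 1"
  by (simp add: polygon_vertex_def norm_exp_eq_Re)

lemma polygon_vertex_0 [simp]: "polygon_vertex n 0 = 1"
  by (simp add: polygon_vertex_def)

lemma attraction_within_polygon: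
  "0 < \<rho> \<Longrightarrow> attraction (of_real \<rho>) (of_real \<rho> * polygon_vertex n l) = (1 / \<rho>\<^sup>2) *\<^sub>R attraction 1 (polygon_vertex n l)"
  using attraction_scale[of \<rho> 1] by simp

definition ring_attraction :: "nat \<Rightarrow> real \<Rightarrow> complex \<Rightarrow> complex" where
  "ring_attraction n \<rho> x = (\<Sum>l<n. attraction x (of_real \<rho> * polygon_vertex n l))"

definition polygon_self_attraction :: "nat \<Rightarrow> real" where
  "polygon_self_attraction n = Re (\<Sum>l\<in>{1..<n}. attraction 1 (polygon_vertex n l))"

lemma Re_ring_attraction_on_inner_point_nonneg:
  assumes "0 \<le> \<rho>1" "\<rho>1 < \<rho>2"
  shows "Re (ring_attraction n \<rho>2 (of_real \<rho>1)) \<ge> 0"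
proof -
  define r where "r = \<rho>1 / \<rho>2"
  define \<omega> where "\<omega> = polygon_vertex n 1"
  have "\<rho>2 > 0" "0 \<le> r" "r < 1" "\<rho>1 = \<rho>2 * r"
    using assms by (auto simp: r_def)
  have vertex: "polygon_vertex n l = \<omega> ^ l" for l
    unfolding \<omega>_def by (rule polygon_vertex_eq_power)
  have \<omega>: "\<omega> ^ n = 1" "norm \<omega> = 1"
    unfolding \<omega>_def by (rule polygon_vertex_power_n norm_polygon_vertex)+
  have "ring_attraction n \<rho>2 (of_real \<rho>1) = (1 / \<rho>2\<^sup>2) *\<^sub>R (\<Sum>l<n. attraction (of_real r) (\<omega> ^ l))"
    using \<open>\<rho>2 > 0\<close> \<open>\<rho>1 = \<rho>2 * r\<close>
    by (simp add: ring_attraction_def scaleR_sum_right attraction_scale vertex)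
  also have "(\<Sum>l<n. attraction (of_real r) (\<omega> ^ l)) = (\<Sum>l<n. (\<omega> ^ l) ^ 1 *
      (cnj (1 - of_real r * \<omega> ^ l) / of_real (norm (1 - of_real r * \<omega> ^ l) ^ 3)))"
    using attraction_on_unit_circle \<omega>(2) by (simp add: norm_power)
  finally show ?thesis
    using Re_sum_roots_cnj_div_norm_cube(1)[OF \<open>0 \<le> r\<close> \<open>r < 1\<close> \<omega>, of 1] \<open>\<rho>2 > 0\<close>
    by simp
qed

lemma Re_ring_attraction_on_outer_point_le:
  assumes "0 \<le> \<rho>1" "\<rho>1 < \<rho>2"
  shows "\<rho>2\<^sup>2 * Re (ring_attraction n \<rho>1 (of_real \<rho>2)) \<le> - n * (1 + 3/4 * (\<rho>1 / \<rho>2)\<^sup>2)"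
proof -
  define r where "r = \<rho>1 / \<rho>2"
  define \<omega> where "\<omega> = polygon_vertex n 1"
  have "\<rho>2 > 0" "0 \<le> r" "r < 1" "\<rho>1 = \<rho>2 * r"
    using assms by (auto simp: r_def)
  have vertex: "polygon_vertex n l = \<omega> ^ l" for l
    unfolding \<omega>_def by (rule polygon_vertex_eq_power)
  have \<omega>: "\<omega> ^ n = 1" "norm \<omega> = 1"
    unfolding \<omega>_def by (rule polygon_vertex_power_n norm_polygon_vertex)+
  have "attraction (of_real \<rho>2) (of_real \<rho>1 * \<omega> ^ l) = (1 / \<rho>2\<^sup>2) *\<^sub>R attraction 1 (of_real r * \<omega> ^ l)" for l
    using attraction_scale[OF \<open>\<rho>2 > 0\<close>, of 1 "of_real r * \<omega> ^ l"] \<open>\<rho>1 = \<rho>2 * r\<close>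
    by (simp add: mult.assoc)
  then have "\<rho>2\<^sup>2 * Re (ring_attraction n \<rho>1 (of_real \<rho>2)) = (\<Sum>l<n. Re (attraction 1 (of_real r * \<omega> ^ l)))"
    using \<open>\<rho>2 > 0\<close> by (simp add: ring_attraction_def vertex Re_sum sum_distrib_left)
  also have "\<dots> = - Re (\<Sum>l<n. cnj (1 - of_real r * \<omega> ^ l) / of_real (norm (1 - of_real r * \<omega> ^ l) ^ 3))"
    by (simp only: Re_attraction_from_one Re_sum sum_negf)
  also have "\<dots> \<le> - n * (1 + 3/4 * r\<^sup>2)"
    using Re_sum_roots_cnj_div_norm_cube(2)[OF \<open>0 \<le> r\<close> \<open>r < 1\<close> \<omega>]
    by simp
  finally show ?thesis
    by (simp add: r_def)
qed

lemma twogon_pos_eq: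
  "twogon_pos n \<rho>1 \<rho>2 (0, l) = 0"
  "twogon_pos n \<rho>1 \<rho>2 (1, l) = of_real \<rho>1 * polygon_vertex n l"
  "twogon_pos n \<rho>1 \<rho>2 (2, l) = of_real \<rho>2 * polygon_vertex n l"
  by (simp_all add: twogon_pos_def polygon_vertex_def)

lemma twogon_motion_eq: "twogon_motion n \<rho>1 \<rho>2 = (\<lambda>b t. twogon_pos n \<rho>1 \<rho>2 b * exp (\<i> * of_real t))"
  by (simp add: fun_eq_iff twogon_motion_def)

lemma sum_Pair_image_union:
  fixes g :: "nat \<times> nat \<Rightarrow> 'a::comm_monoid_add"
  assumes "finite A" "finite B" "k1 \<noteq> k2"
  shows "sum g (Pair k1 ` A \<union> Pair k2 ` B) = (\<Sum>l\<in>A. g (k1,l)) + (\<Sum>l\<in>B. g (k2,l))"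
  using assms by (subst sum.union_disjoint) (auto simp: sum.reindex inj_on_def)

lemma sum_bodies_remove_inner_vertex:
  "(\<Sum>b\<in>bodies n - {(1,0)}. g b) = g (0,0) + (\<Sum>l\<in>{1..<n}. g (1,l)) + (\<Sum>l<n. g (2,l))"
proof -
  have "bodies n - {(1,0)} = insert (0,0) (Pair 1 ` {1..<n} \<union> Pair 2 ` {..<n})"
    by (auto simp: bodies_def)
  then show ?thesis
    by (simp add: sum_Pair_image_union image_iff add.assoc)
qed

lemma sum_bodies_remove_outer_vertex:
  "(\<Sum>b\<in>bodies n - {(2,0)}. g b) = g (0,0) + (\<Sum>l<n. g (1,l)) + (\<Sum>l\<in>{1..<n}. g (2,l))"
proof -
  have "bodies n - {(2,0)} = insert (0,0) (Pair 1 ` {..<n} \<union> Pair 2 ` {1..<n})"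
    by (auto simp: bodies_def)
  then show ?thesis
    by (simp add: sum_Pair_image_union image_iff add.assoc)
qed

lemma twogon_vertex_balance:
  assumes "rel_eq_mass_system n \<rho>1 \<rho>2 m" "b \<in> bodies n"
  shows "- twogon_pos n \<rho>1 \<rho>2 b = (\<Sum>c\<in>bodies n - {b}.
           body_mass m c *\<^sub>R attraction (twogon_pos n \<rho>1 \<rho>2 b) (twogon_pos n \<rho>1 \<rho>2 c))"
proof (rule rotating_solution_balance)
  show "nbody_solution (bodies n) (body_mass m) (\<lambda>b t. twogon_pos n \<rho>1 \<rho>2 b * exp (\<i> * of_real t))"
    using assms(1) by (simp add: rel_eq_mass_system_def flip: twogon_motion_eq)
  show "body_mass m b \<noteq> 0"
    using assms(1) by (auto simp: rel_eq_mass_system_def body_mass_def split: prod.splits)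
qed fact

lemma inner_vertex_mass_relation:
  assumes "rel_eq_mass_system n \<rho>1 \<rho>2 (m0, m1, m2)" "0 < \<rho>1" "0 < n"
  shows "m0 = \<rho>1 ^ 3 + m1 * polygon_self_attraction n + m2 * \<rho>1\<^sup>2 * Re (ring_attraction n \<rho>2 (of_real \<rho>1))"
proof -
  have "(1, 0) \<in> bodies n"
    using assms(3) by (simp add: bodies_def)
  from arg_cong[where f = Re, OF twogon_vertex_balance[OF assms(1) this]]
  have "- \<rho>1 = m0 * Re (attraction (of_real \<rho>1) 0) + m1 / \<rho>1\<^sup>2 * polygon_self_attraction n
      + m2 * Re (ring_attraction n \<rho>2 (of_real \<rho>1))"
    using assms(2) unfolding sum_bodies_remove_inner_vertex twogon_pos_eq
    by (simp add: body_mass_def ring_attraction_def polygon_self_attraction_def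
        attraction_within_polygon scaleR_sum_right Re_sum sum_distrib_left)
  then show ?thesis
    using assms(2) by (simp add: Re_attraction_to_origin field_simps power3_eq_cube power2_eq_square)
qed

lemma outer_vertex_mass_relation:
  assumes "rel_eq_mass_system n \<rho>1 \<rho>2 (m0, m1, m2)" "0 < \<rho>2" "0 < n"
  shows "m0 = \<rho>2 ^ 3 + m1 * \<rho>2\<^sup>2 * Re (ring_attraction n \<rho>1 (of_real \<rho>2)) + m2 * polygon_self_attraction n"
proof -
  have "(2, 0) \<in> bodies n"
    using assms(3) by (simp add: bodies_def)
  from arg_cong[where f = Re, OF twogon_vertex_balance[OF assms(1) this]]
  have "- \<rho>2 = m0 * Re (attraction (of_real \<rho>2) 0) + m1 * Re (ring_attraction n \<rho>1 (of_real \<rho>2))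
      + m2 / \<rho>2\<^sup>2 * polygon_self_attraction n"
    using assms(2) unfolding sum_bodies_remove_outer_vertex twogon_pos_eq
    by (simp add: body_mass_def ring_attraction_def polygon_self_attraction_def
        attraction_within_polygon scaleR_sum_right Re_sum sum_distrib_left)
  then show ?thesis
    using assms(2) by (simp add: Re_attraction_to_origin field_simps power3_eq_cube power2_eq_square)
qed

lemma linear_system_trivial_solution:
  fixes d1 d2 u P Q :: real
  assumes "0 < P" "Q < 0" "d1 * u + d2 * P = 0" "d1 * Q + d2 * u = 0"
  shows "d1 = 0 \<and> d2 = 0"
proof -
  have "d1 * (u\<^sup>2 - P * Q) = u * (d1 * u + d2 * P) - P * (d1 * Q + d2 * u)"
    by (simp add: algebra_simps power2_eq_square)
  then have "d1 * (u\<^sup>2 - P * Q) = 0"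
    using assms(3,4) by simp
  moreover have "u\<^sup>2 - P * Q > 0"
    using assms(1,2) mult_pos_neg[of P Q] zero_le_power2[of u] by linarith
  ultimately have "d1 = 0"
    by simp
  with assms(1,3) show ?thesis
    by simp
qed

lemma mass_system_unique:
  assumes "rel_eq_mass_system n \<rho>1 \<rho>2 m" "rel_eq_mass_system n \<rho>1 \<rho>2 m'"
    and "total_mass n m = total_mass n m'" "0 < \<rho>1" "\<rho>1 < \<rho>2" "0 < n"
  shows "m = m'"
proof -
  obtain a0 a1 a2 b0 b1 b2 where m: "m = (a0, a1, a2)" "m' = (b0, b1, b2)"
    by (cases m, cases m')
  define S where "S = polygon_self_attraction n"
  define Y where "Y = Re (ring_attraction n \<rho>2 (of_real \<rho>1))"
  define Z where "Z = Re (ring_attraction n \<rho>1 (of_real \<rho>2))"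
  have "\<rho>2 > 0"
    using assms(4,5) by simp
  note inner = inner_vertex_mass_relation[of n \<rho>1 \<rho>2, OF _ assms(4,6), folded S_def Y_def]
  note outer = outer_vertex_mass_relation[of n \<rho>1 \<rho>2, OF _ \<open>\<rho>2 > 0\<close> assms(6), folded S_def Z_def]
  have total: "a0 + n * (a1 + a2) = b0 + n * (b1 + b2)"
    using assms(3) by (simp add: m total_mass_def)
  have "(a1 - b1) * (S + n) + (a2 - b2) * (n + \<rho>1\<^sup>2 * Y) = 0"
    using inner[OF assms(1)[unfolded m(1)]] inner[OF assms(2)[unfolded m(2)]] total
    by (simp add: algebra_simps)
  moreover have "(a1 - b1) * (n + \<rho>2\<^sup>2 * Z) + (a2 - b2) * (S + n) = 0"
    using outer[OF assms(1)[unfolded m(1)]] outer[OF assms(2)[unfolded m(2)]] total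
    by (simp add: algebra_simps)
  moreover have "0 < n + \<rho>1\<^sup>2 * Y"
    using Re_ring_attraction_on_inner_point_nonneg[of \<rho>1 \<rho>2 n] assms(4-6)
    by (simp add: Y_def add_pos_nonneg)
  moreover have "n + \<rho>2\<^sup>2 * Z < 0"
  proof -
    have "\<rho>2\<^sup>2 * Z \<le> - n * (1 + 3/4 * (\<rho>1 / \<rho>2)\<^sup>2)"
      using Re_ring_attraction_on_outer_point_le[of \<rho>1 \<rho>2 n] assms(4,5) by (simp add: Z_def)
    also have "\<dots> < - n"
      using assms(4-6) \<open>\<rho>2 > 0\<close> by (simp add: field_simps)
    finally show ?thesis
      by simp
  qed
  ultimately have "a1 = b1" "a2 = b2"
    using linear_system_trivial_solution[of "n + \<rho>1\<^sup>2 * Y" "n + \<rho>2\<^sup>2 * Z" "a1 - b1" "S + n" "a2 - b2"]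
    by auto
  with total show ?thesis
    by (simp add: m)
qed

theorem proposition4:
  fixes n :: nat and \<rho>1 \<rho>2 :: real
  assumes "n \<ge> 2" and "0 < \<rho>1" and "\<rho>1 < \<rho>2"
  shows "\<not> really_perverse n \<rho>1 \<rho>2"
  using mass_system_unique[OF _ _ _ assms(2,3)] assms(1)
  unfolding really_perverse_def by auto

end
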